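(* Assume CH. Let $\mathcal{I}$ be a $\sigma$-ideal on $\mathbb{R}$ satisfying the standing assumptions. Then there exists an $\mathcal{I}$-Luzin set $L\subseteq\mathbb{R}$ such that its $\mathbb{Q}$-linear span $\mathrm{span}_{\mathbb{Q}}(L)$ is also an $\mathcal{I}$-Luzin set.
   Context: Standing assumptions on $\mathcal{I}$: $\mathcal{I}$ is a $\sigma$-ideal of subsets of $\mathbb{R}$ such that $\mathbb{R}\notin\mathcal{I}$; $x+I\in\mathcal{I}$ and $xI\in\mathcal{I}$ for all $x\in\mathbb{R}$, $I\in\mathcal{I}$; every member of $\mathcal{I}$ is contained in a Borel member of $\mathcal{I}$; and for all Borel $A,B\notin\mathcal{I}$ the set $A-B$ has nonempty interior. A set $L\subseteq\mathbb{R}$ is $\mathcal{I}$-Luzin if $|L|=\mathfrak{c}$ and $L\cap I$ is countable for every $I\in\mathcal{I}$. *)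

theory Defs
  imports "HOL-Analysis.Analysis" "HOL-Library.Equipollence"
begin

definition CH :: bool where
  "CH \<longleftrightarrow> (\<forall>A :: real set. uncountable A \<longrightarrow> A \<approx> (UNIV :: real set))"

definition sigma_ideal :: "real set set \<Rightarrow> bool" where
  "sigma_ideal \<I> \<longleftrightarrow>
     {} \<in> \<I> \<and>
     (\<forall>A B. A \<in> \<I> \<longrightarrow> B \<subseteq> A \<longrightarrow> B \<in> \<I>) \<and>
     (\<forall>f :: nat \<Rightarrow> real set. range f \<subseteq> \<I> \<longrightarrow> \<Union>(range f) \<in> \<I>)"

definition standing_ideal :: "real set set \<Rightarrow> bool" where
  "standing_ideal \<I> \<longleftrightarrow>
     sigma_ideal \<I> \<and>
     (UNIV :: real set) \<notin> \<I> \<and>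
     (\<forall>x. \<forall>I\<in>\<I>. (\<lambda>y. x + y) ` I \<in> \<I> \<and> (\<lambda>y. x * y) ` I \<in> \<I>) \<and>
     (\<forall>I\<in>\<I>. \<exists>B\<in>\<I>. B \<in> sets borel \<and> I \<subseteq> B) \<and>
     (\<forall>A B. A \<in> sets borel \<longrightarrow> B \<in> sets borel \<longrightarrow> A \<notin> \<I> \<longrightarrow> B \<notin> \<I> \<longrightarrow>
        interior {a - b | a b. a \<in> A \<and> b \<in> B} \<noteq> {})"

definition ideal_Luzin :: "real set set \<Rightarrow> real set \<Rightarrow> bool" where
  "ideal_Luzin \<I> L \<longleftrightarrow> L \<approx> (UNIV :: real set) \<and> (\<forall>I\<in>\<I>. countable (L \<inter> I))"

definition rat_span :: "real set \<Rightarrow> real set" where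
  "rat_span L = {\<Sum>x\<in>F. of_rat (c x) * x | F c. finite F \<and> F \<subseteq> L}"

end

theory Submission
  imports Defs
begin

(*
  Under CH the reals carry a well-founded strict total order r in which
  every element has only countably many predecessors; and, independently of CH, the
  Borel sets can be indexed by reals, so that (every ideal set having a Borel hull in the
  ideal) the ideal has a cofinal subfamily G indexed by reals.  By transfinite recursion
  along r we choose reals point(a) avoiding the rational span S_a of the earlier points
  and every set {x. q x + s \<in> G \<gamma>} with \<gamma> before a, q a nonzero rational and s \<in> S_a.
  This forbidden set is a countable union of affine images of ideal sets plus a
  countable set, so it lies in the ideal and a choice is possible.  Then a rational
  combination of points lying in G \<gamma> only involves indices up to \<gamma>, so the span of
  all points meets every ideal set in a countable set.
*)

section \<open>Borel sets are indexed by reals\<close>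

text \<open>Borel codes: every Borel set arises from a countable basis by complements and
  countable unions, so it is the value of a well-founded, countably branching code.\<close>

datatype borel_code = BBasic nat | BCompl borel_code | BUnion "nat \<Rightarrow> borel_code"

primrec code_set :: "real set set \<Rightarrow> borel_code \<Rightarrow> real set" where
  "code_set B (BBasic n) = from_nat_into B n"
| "code_set B (BCompl c) = - code_set B c"
| "code_set B (BUnion f) = (\<Union>i. code_set B (f i))"

lemma borel_sets_coded: "\<exists>B. sets borel \<subseteq> range (code_set B)"
proof -
  obtain B :: "real set set" where B: "countable B" "topological_basis B"
    using ex_countable_basis by blast
  have "sets borel = sets (sigma UNIV B)"
    using borel_eq_countable_basis[OF B] by simp
  also have "\<dots> = sigma_sets UNIV B" by (rule sets_measure_of) simp
  finally have "sets borel = sigma_sets UNIV B" .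
  moreover have "sigma_sets UNIV B \<subseteq> range (code_set B)"
  proof
    fix X assume "X \<in> sigma_sets UNIV B"
    then show "X \<in> range (code_set B)"
    proof induction
      case (Basic a)
      then have "a = code_set B (BBasic (to_nat_on B a))"
        using B(1) by (simp add: from_nat_into_to_nat_on)
      then show ?case by blast
    next
      case Empty
      let ?all = "BUnion (\<lambda>n. if n = 0 then BBasic 0 else BCompl (BBasic 0))"
      have "x \<in> code_set B ?all" for x
        by (cases "x \<in> from_nat_into B 0") (auto intro: UN_I[of 0] UN_I[of 1])
      then have "code_set B ?all = UNIV" by blast
      then have "{} = code_set B (BCompl ?all)" by simp
      then show ?case by blast
    next
      case (Compl a)
      then obtain c where "a = code_set B c" by auto
      then have "UNIV - a = code_set B (BCompl c)" by auto
      then show ?case by blast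
    next
      case (Union a)
      then have "\<forall>i. \<exists>c. a i = code_set B c" by blast
      then obtain c where "\<And>i. a i = code_set B (c i)" by metis
      then have "\<Union>(range a) = code_set B (BUnion c)" by auto
      then show ?case by blast
    qed
  qed
  ultimately show ?thesis by auto
qed

text \<open>A code is determined by the set of its labelled root-to-node paths; this embeds
  the codes into the sets of naturals, whose number is that of the reals.\<close>

primrec code_paths :: "borel_code \<Rightarrow> (nat list \<times> nat) set" where
  "code_paths (BBasic n) = {([], n + 2)}"
| "code_paths (BCompl c) = insert ([], 0) ((\<lambda>(p, k). (0 # p, k)) ` code_paths c)"
| "code_paths (BUnion f) = insert ([], 1) (\<Union>i. (\<lambda>(p, k). (i # p, k)) ` code_paths (f i))"

definition root_labels :: "(nat list \<times> nat) set \<Rightarrow> nat set" where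
  "root_labels T = {k. ([], k) \<in> T}"

definition subtree :: "nat \<Rightarrow> (nat list \<times> nat) set \<Rightarrow> (nat list \<times> nat) set" where
  "subtree i T = {(p, k). (i # p, k) \<in> T}"

lemma root_labels_code_paths:
  "root_labels (code_paths (BBasic n)) = {n + 2}"
  "root_labels (code_paths (BCompl c)) = {0}"
  "root_labels (code_paths (BUnion f)) = {1}"
  by (auto simp: root_labels_def)

lemma subtree_code_paths:
  "subtree 0 (code_paths (BCompl c)) = code_paths c"
  "subtree i (code_paths (BUnion f)) = code_paths (f i)"
  by (auto simp: subtree_def)

lemma inj_code_paths: "inj code_paths"
proof -
  have "code_paths c = code_paths d \<Longrightarrow> c = d" for c d
  proof (induction c arbitrary: d)
    case (BBasic n)
    then have "root_labels (code_paths d) = {n + 2}"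
      by (metis root_labels_code_paths(1))
    then show ?case by (cases d) (simp_all add: root_labels_code_paths del: code_paths.simps)
  next
    case (BCompl c)
    then have root: "root_labels (code_paths d) = {0}"
      by (metis root_labels_code_paths(2))
    show ?case
    proof (cases d)
      case (BCompl c')
      then show ?thesis using BCompl.IH BCompl.prems by (metis subtree_code_paths(1))
    qed (use root in \<open>simp_all add: root_labels_code_paths del: code_paths.simps\<close>)
  next
    case (BUnion f)
    then have root: "root_labels (code_paths d) = {1}"
      by (metis root_labels_code_paths(3))
    show ?case
    proof (cases d)
      case (BUnion g)
      have "f i = g i" for i
        using BUnion.IH[of _ "g i"] BUnion.prems BUnion by (metis rangeI subtree_code_paths(2))
      then show ?thesis using BUnion by auto
    qed (use root in \<open>simp_all add: root_labels_code_paths del: code_paths.simps\<close>)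
  qed
  then show ?thesis by (rule injI)
qed

text \<open>There are at most continuum many codes, hence at most continuum many Borel sets.\<close>

lemma borel_sets_indexed_by_reals: "\<exists>g :: real \<Rightarrow> real set. sets borel \<subseteq> range g"
proof -
  obtain B where B: "sets borel \<subseteq> range (code_set B)" using borel_sets_coded by blast
  have "inj (\<lambda>c. to_nat ` code_paths c)"
    using inj_code_paths by (simp add: inj_def inj_image_eq_iff)
  then have "(UNIV :: borel_code set) \<lesssim> (UNIV :: nat set set)"
    unfolding lepoll_def by blast
  also have "\<dots> \<approx> (UNIV :: real set)" by (rule nat_sets_eqpoll_reals)
  finally have "(UNIV :: borel_code set) \<lesssim> (UNIV :: real set)" .
  then have "\<exists>h :: real \<Rightarrow> borel_code. UNIV \<subseteq> range h" by (simp only: lepoll_iff)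
  then obtain h :: "real \<Rightarrow> borel_code" where h: "UNIV \<subseteq> range h" ..
  have "range (code_set B) \<subseteq> range (\<lambda>x. code_set B (h x))" (is "_ \<subseteq> range ?g")
  proof (rule image_subsetI)
    fix c
    obtain x where "c = h x" using h by blast
    then show "code_set B c \<in> range (\<lambda>x. code_set B (h x))" by simp
  qed
  with B have "sets borel \<subseteq> range ?g" by (rule order_trans)
  then show ?thesis by (rule exI[of _ ?g])
qed

section \<open>Orders on the reals\<close>

text \<open>Under CH the reals carry a well-order with countable initial segments: take the strict
  part of a cardinal well-order of the reals; every proper initial segment has smaller
  cardinality than the continuum, hence is countable by CH.\<close>

context
  includes cardinal_syntax
begin

lemma CH_countable_initial_segments:
  assumes CH
  shows "\<exists>r :: real rel. wf r \<and> trans r \<and> total_on UNIV r \<and> (\<forall>y. countable {x. (x, y) \<in> r})"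
proof -
  let ?W = "|UNIV :: real set|"
  have W: "Card_order ?W" "Field ?W = UNIV"
    by (rule card_of_Card_order, rule Field_card_of)
  then have "well_order_on UNIV ?W"
    using card_order_on_well_order_on[OF card_of_card_order_on] by blast
  then have wf: "wf (?W - Id)" and strict: "strict_linear_order_on UNIV (?W - Id)"
    by (auto simp: well_order_on_def intro: strict_linear_order_on_diff_Id)
  have "countable {x. (x, y) \<in> ?W - Id}" for y
  proof (rule ccontr)
    assume "uncountable {x. (x, y) \<in> ?W - Id}"
    moreover have "underS ?W y = {x. (x, y) \<in> ?W - Id}" unfolding underS_def by auto
    ultimately have "underS ?W y \<approx> (UNIV :: real set)"
      using assms unfolding CH_def by simp
    moreover have "|underS ?W y| <o ?W" using W by (simp add: card_of_underS)
    ultimately show False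
      by (metis eqpoll_iff_card_of_ordIso not_ordLess_ordIso)
  qed
  with wf strict show ?thesis unfolding strict_linear_order_on_def by blast
qed

end

lemma finite_has_greatest:
  assumes "trans r" "total_on UNIV r" "finite A" "A \<noteq> {}"
  shows "\<exists>m\<in>A. \<forall>a\<in>A. a = m \<or> (a, m) \<in> r"
  using assms(3,4)
proof (induction A rule: finite_ne_induct)
  case (singleton x)
  then show ?case by simp
next
  case (insert x F)
  then obtain m where m: "m \<in> F" "\<forall>a\<in>F. a = m \<or> (a, m) \<in> r" by blast
  show ?case
  proof (cases "x = m \<or> (x, m) \<in> r")
    case True
    then show ?thesis using m by auto
  next
    case False
    then have "(m, x) \<in> r" using assms(2) unfolding total_on_def by blast
    then have "\<forall>a\<in>insert x F. a = x \<or> (a, x) \<in> r"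
      using m assms(1) by (auto dest: transD)
    then show ?thesis by blast
  qed
qed

section \<open>Rational spans\<close>

lemma rat_span_mem: "x \<in> A \<Longrightarrow> x \<in> rat_span A"
  unfolding rat_span_def
  by (rule CollectI, rule exI[of _ "{x}"], rule exI[of _ "\<lambda>_. 1"]) simp

lemma rat_span_image_sum:
  assumes "finite A" "A \<subseteq> X" "inj_on f A"
  shows "(\<Sum>a\<in>A. of_rat (c a) * f a) \<in> rat_span (f ` X)"
proof -
  let ?d = "\<lambda>y. c (the_inv_into A f y)"
  have "(\<Sum>a\<in>A. of_rat (c a) * f a) = (\<Sum>y\<in>f ` A. of_rat (?d y) * y)"
    using assms(3) by (simp add: sum.reindex the_inv_into_f_f)
  moreover have "finite (f ` A)" "f ` A \<subseteq> f ` X" using assms(1,2) by auto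
  ultimately show ?thesis
    unfolding rat_span_def by (intro CollectI exI[of _ "f ` A"] exI[of _ ?d]) simp
qed

lemma rat_span_image_repr:
  assumes "y \<in> rat_span (f ` X)"
  shows "\<exists>A c. finite A \<and> A \<subseteq> X \<and> inj_on f A \<and> (\<forall>a\<in>A. c a \<noteq> 0) \<and>
           y = (\<Sum>a\<in>A. of_rat (c a) * f a)"
proof -
  obtain F c where F: "y = (\<Sum>x\<in>F. of_rat (c x) * x)" "finite F" "F \<subseteq> f ` X"
    using assms unfolding rat_span_def by blast
  define F' where "F' = {x\<in>F. c x \<noteq> 0}"
  have "y = (\<Sum>x\<in>F'. of_rat (c x) * x)"
    unfolding F(1) F'_def by (rule sum.mono_neutral_right) (use F in auto)
  moreover obtain A where A: "A \<subseteq> X" "inj_on f A" "F' = f ` A"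
    using F(3) subset_image_inj[of F' f X] unfolding F'_def by blast
  moreover have "finite F'" using F(2) unfolding F'_def by simp
  then have "finite A" using A finite_imageD[of f A] by simp
  ultimately show ?thesis
    by (intro exI[of _ A] exI[of _ "c \<circ> f"]) (auto simp: F'_def sum.reindex)
qed

text \<open>The span of a countable set is countable: it is an image of the finite lists of
  rational-real pairs.\<close>

lemma rat_span_countable:
  assumes "countable A"
  shows "countable (rat_span A)"
proof -
  define comb where "comb xs = sum_list (map (\<lambda>(q, x). of_rat q * x) xs)"
    for xs :: "(rat \<times> real) list"
  have "rat_span A \<subseteq> comb ` lists (UNIV \<times> A)"
  proof
    fix y assume "y \<in> rat_span A"
    then obtain F c where y: "y = (\<Sum>x\<in>F. of_rat (c x) * x)" "finite F" "F \<subseteq> A"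
      unfolding rat_span_def by blast
    define xs where "xs = map (\<lambda>x. (c x, x)) (sorted_list_of_set F)"
    have "comb xs = y"
      using y by (simp add: comb_def xs_def comp_def sum_list_distinct_conv_sum_set)
    moreover have "xs \<in> lists (UNIV \<times> A)" using y unfolding xs_def by auto
    ultimately show "y \<in> comb ` lists (UNIV \<times> A)" by blast
  qed
  moreover have "countable (lists ((UNIV :: rat set) \<times> A))"
    using assms by (intro countable_lists countable_SIGMA) simp_all
  ultimately show ?thesis by (meson countable_image countable_subset)
qed

section \<open>Closure properties of the ideal\<close>

lemma sigma_ideal_subset: "sigma_ideal \<I> \<Longrightarrow> A \<in> \<I> \<Longrightarrow> B \<subseteq> A \<Longrightarrow> B \<in> \<I>"
  unfolding sigma_ideal_def by blast

lemma sigma_ideal_countable_UN: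
  assumes "sigma_ideal \<I>" "countable K" "\<And>k. k \<in> K \<Longrightarrow> X k \<in> \<I>"
  shows "(\<Union>k\<in>K. X k) \<in> \<I>"
proof (cases "K = {}")
  case True
  then show ?thesis using assms(1) unfolding sigma_ideal_def by simp
next
  case False
  have "range (\<lambda>n. X (from_nat_into K n)) \<subseteq> \<I>"
    using assms(3) from_nat_into[OF False] by blast
  then have "(\<Union>n. X (from_nat_into K n)) \<in> \<I>"
    using assms(1) unfolding sigma_ideal_def by blast
  moreover have "(\<Union>n. X (from_nat_into K n)) = (\<Union>k\<in>K. X k)"
    using range_from_nat_into[OF False assms(2)] by (metis image_image)
  ultimately show ?thesis by simp
qed

lemma sigma_ideal_Un: "sigma_ideal \<I> \<Longrightarrow> A \<in> \<I> \<Longrightarrow> B \<in> \<I> \<Longrightarrow> A \<union> B \<in> \<I>"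
  using sigma_ideal_countable_UN[of \<I> "{A, B}" id] by auto

lemma standing_idealD:
  assumes "standing_ideal \<I>"
  shows standing_ideal_sigma: "sigma_ideal \<I>"
    and standing_ideal_UNIV: "(UNIV :: real set) \<notin> \<I>"
    and standing_ideal_translate: "I \<in> \<I> \<Longrightarrow> (\<lambda>y. x + y) ` I \<in> \<I>"
    and standing_ideal_scale: "I \<in> \<I> \<Longrightarrow> (\<lambda>y. x * y) ` I \<in> \<I>"
    and standing_ideal_borel_hull: "I \<in> \<I> \<Longrightarrow> \<exists>B\<in>\<I>. B \<in> sets borel \<and> I \<subseteq> B"
    and standing_ideal_interior: "A \<in> sets borel \<Longrightarrow> B \<in> sets borel \<Longrightarrow> A \<notin> \<I> \<Longrightarrow> B \<notin> \<I> \<Longrightarrow>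
           interior {a - b | a b. a \<in> A \<and> b \<in> B} \<noteq> {}"
  using assms unfolding standing_ideal_def by simp_all

text \<open>The interior condition applied to \<open>A = B = {x}\<close> shows that singletons, hence all
  countable sets, belong to the ideal: otherwise \<open>{x} - {x} = {0}\<close> would have interior.\<close>

lemma standing_ideal_countable:
  assumes "standing_ideal \<I>" "countable C"
  shows "C \<in> \<I>"
proof -
  have singleton: "{x} \<in> \<I>" for x
  proof (rule ccontr)
    assume notin: "{x} \<notin> \<I>"
    have borel: "{x} \<in> sets borel" by simp
    have "interior {a - b | a b. a \<in> {x} \<and> b \<in> {x}} \<noteq> {}"
      by (rule standing_ideal_interior[OF assms(1) borel borel notin notin])
    moreover have "{a - b | a b. a \<in> {x} \<and> b \<in> {x}} = {0 :: real}" by auto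
    ultimately show False by simp
  qed
  have "(\<Union>x\<in>C. {x}) \<in> \<I>"
    using standing_ideal_sigma[OF assms(1)] assms(2) singleton
    by (rule sigma_ideal_countable_UN)
  then show ?thesis by simp
qed

lemma standing_ideal_affine:
  assumes "standing_ideal \<I>" "I \<in> \<I>"
  shows "(\<lambda>y. u * (v + y)) ` I \<in> \<I>"
proof -
  have "(\<lambda>y. u * y) ` ((\<lambda>y. v + y) ` I) \<in> \<I>"
    using assms by (intro standing_ideal_scale standing_ideal_translate)
  then show ?thesis by (simp add: image_image)
qed

text \<open>Since every member of the ideal has a Borel hull in the ideal and the Borel sets are
  indexed by reals, the ideal has a cofinal subfamily indexed by reals.\<close>

lemma standing_ideal_cofinal_family:
  assumes "standing_ideal \<I>"
  obtains G :: "real \<Rightarrow> real set"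
  where "\<And>\<gamma>. G \<gamma> \<in> \<I>" and "\<And>I. I \<in> \<I> \<Longrightarrow> \<exists>\<gamma>. I \<subseteq> G \<gamma>"
proof -
  obtain g :: "real \<Rightarrow> real set" where g: "sets borel \<subseteq> range g"
    using borel_sets_indexed_by_reals by blast
  define G where "G \<gamma> = (if g \<gamma> \<in> \<I> then g \<gamma> else {})" for \<gamma>
  have "G \<gamma> \<in> \<I>" for \<gamma>
    using standing_ideal_sigma[OF assms] unfolding G_def sigma_ideal_def by simp
  moreover have "\<exists>\<gamma>. I \<subseteq> G \<gamma>" if I: "I \<in> \<I>" for I
  proof -
    obtain B where B: "B \<in> \<I>" "B \<in> sets borel" "I \<subseteq> B"
      using standing_ideal_borel_hull[OF assms I] by blast
    then obtain \<gamma> where "B = g \<gamma>" using g by blast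
    then show ?thesis using B by (intro exI[of _ \<gamma>]) (simp add: G_def)
  qed
  ultimately show ?thesis using that by blast
qed

section \<open>The construction\<close>

locale span_luzin_construction =
  fixes \<I> :: "real set set" and r :: "real rel" and G :: "real \<Rightarrow> real set"
  assumes sigma: "sigma_ideal \<I>"
    and UNIV_notin: "(UNIV :: real set) \<notin> \<I>"
    and countable_in: "\<And>C. countable C \<Longrightarrow> C \<in> \<I>"
    and affine_in: "\<And>I u v. I \<in> \<I> \<Longrightarrow> (\<lambda>y. u * (v + y)) ` I \<in> \<I>"
    and G_in: "\<And>\<gamma>. G \<gamma> \<in> \<I>"
    and G_cofinal: "\<And>I. I \<in> \<I> \<Longrightarrow> \<exists>\<gamma>. I \<subseteq> G \<gamma>"
    and wf: "wf r" and trans: "trans r" and total: "total_on UNIV r"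
    and countable_segment: "\<And>y. countable {x. (x, y) \<in> r}"
begin

definition span_below :: "(real \<Rightarrow> real) \<Rightarrow> real \<Rightarrow> real set" where
  "span_below h a = rat_span (h ` {b. (b, a) \<in> r})"

definition affine_hits :: "(real \<Rightarrow> real) \<Rightarrow> real \<Rightarrow> real set" where
  "affine_hits h a =
     {x. \<exists>\<gamma> q s. (\<gamma>, a) \<in> r \<and> q \<noteq> 0 \<and> s \<in> span_below h a \<and> of_rat q * x + s \<in> G \<gamma>}"

definition forbidden :: "(real \<Rightarrow> real) \<Rightarrow> real \<Rightarrow> real set" where
  "forbidden h a = span_below h a \<union> affine_hits h a"

definition point :: "real \<Rightarrow> real" where
  "point = wfrec r (\<lambda>h a. SOME x. x \<notin> forbidden h a)"

lemma countable_span_below: "countable (span_below h a)"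
  unfolding span_below_def using countable_segment by (intro rat_span_countable) simp

text \<open>The forbidden set is a countable union of affine images of the sets \<open>G \<gamma>\<close>
  together with a countable set, hence it belongs to the ideal.\<close>

lemma forbidden_in_ideal: "forbidden h a \<in> \<I>"
proof -
  define K where "K = {\<gamma>. (\<gamma>, a) \<in> r} \<times> (UNIV - {0 :: rat}) \<times> span_below h a"
  define X where "X = (\<lambda>(\<gamma>, q, s). (\<lambda>y. inverse (of_rat q) * (- s + y)) ` G \<gamma>)"
  have "affine_hits h a \<subseteq> (\<Union>k\<in>K. X k)"
  proof
    fix x
    assume "x \<in> affine_hits h a"
    then obtain \<gamma> q s where k: "(\<gamma>, a) \<in> r" "q \<noteq> 0" "s \<in> span_below h a"
      and in_G: "of_rat q * x + s \<in> G \<gamma>" unfolding affine_hits_def by blast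
    have "x = inverse (of_rat q) * (- s + (of_rat q * x + s))" using k(2) by simp
    then have "x \<in> (\<lambda>y. inverse (of_rat q) * (- s + y)) ` G \<gamma>" using in_G by (rule image_eqI)
    then have "x \<in> X (\<gamma>, q, s)" unfolding X_def by simp
    moreover have "(\<gamma>, q, s) \<in> K" using k unfolding K_def by simp
    ultimately show "x \<in> (\<Union>k\<in>K. X k)" by blast
  qed
  moreover have "(\<Union>k\<in>K. X k) \<in> \<I>"
  proof (rule sigma_ideal_countable_UN[OF sigma])
    show "countable K"
      unfolding K_def using countable_segment countable_span_below by (intro countable_SIGMA) auto
    show "X k \<in> \<I>" for k
      unfolding X_def by (cases k) (simp only: prod.case affine_in G_in)
  qed
  ultimately have "affine_hits h a \<in> \<I>"
    by (rule sigma_ideal_subset[OF sigma, rotated])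
  then show ?thesis
    unfolding forbidden_def by (rule sigma_ideal_Un[OF sigma countable_in[OF countable_span_below]])
qed

text \<open>Since the forbidden set is in the ideal and the ideal is proper, the recursion can
  always choose a point outside it.\<close>

lemma point_not_forbidden: "point a \<notin> forbidden point a"
proof -
  have "forbidden h a \<noteq> UNIV" for h
    using forbidden_in_ideal UNIV_notin by metis
  then have ex: "\<exists>x. x \<notin> forbidden h a" for h by blast
  have "cut point r a ` {b. (b, a) \<in> r} = point ` {b. (b, a) \<in> r}"
    by (auto simp: cut_apply)
  then have "forbidden (cut point r a) a = forbidden point a"
    unfolding forbidden_def affine_hits_def span_below_def by simp
  then have "point a = (SOME x. x \<notin> forbidden point a)"
    unfolding point_def by (subst wfrec[OF wf]) simp
  then show ?thesis using someI_ex[OF ex] by simp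
qed

text \<open>Each point avoids the span of the earlier ones, so the points are distinct.\<close>

lemma inj_point: "inj point"
proof -
  have distinct: "point b \<noteq> point a" if "(b, a) \<in> r" for a b
  proof
    assume "point b = point a"
    then have "point a \<in> point ` {b. (b, a) \<in> r}"
      using that by (intro image_eqI[of _ point b]) simp_all
    then have "point a \<in> span_below point a"
      unfolding span_below_def by (rule rat_span_mem)
    then show False using point_not_forbidden unfolding forbidden_def by blast
  qed
  show ?thesis
  proof (rule injI)
    fix x y
    assume eq: "point x = point y"
    show "x = y"
    proof (rule ccontr)
      assume "x \<noteq> y"
      then have "(x, y) \<in> r \<or> (y, x) \<in> r" using total unfolding total_on_def by blast
      then show False using distinct[of x y] distinct[of y x] eq by auto
    qed
  qed
qed

text \<open>Key property: a rational combination with nonzero coefficients of points lying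
  in \<open>G \<gamma>\<close> involves only indices up to \<open>\<gamma>\<close>.  Otherwise its greatest index \<open>m\<close> is
  above \<open>\<gamma>\<close>, and solving for \<open>point m\<close> shows that \<open>point m\<close> is forbidden at \<open>m\<close>.\<close>

lemma combination_in_G_bounded:
  assumes "finite A" "\<forall>a\<in>A. c a \<noteq> 0" "(\<Sum>a\<in>A. of_rat (c a) * point a) \<in> G \<gamma>"
  shows "\<forall>a\<in>A. (a, \<gamma>) \<in> r \<or> a = \<gamma>"
proof (cases "A = {}")
  case False
  then obtain m where m: "m \<in> A" "\<forall>a\<in>A. a = m \<or> (a, m) \<in> r"
    using finite_has_greatest[OF trans total assms(1)] by blast
  have "(m, \<gamma>) \<in> r \<or> m = \<gamma>"
  proof (rule ccontr)
    assume "\<not> ((m, \<gamma>) \<in> r \<or> m = \<gamma>)"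
    then have "(\<gamma>, m) \<in> r" using total unfolding total_on_def by blast
    define s where "s = (\<Sum>a\<in>A - {m}. of_rat (c a) * point a)"
    have "of_rat (c m) * point m + s \<in> G \<gamma>"
      using assms(1,3) m(1) unfolding s_def by (simp add: sum.remove)
    moreover have "s \<in> span_below point m"
      unfolding s_def span_below_def using assms(1) m(2) inj_point
      by (intro rat_span_image_sum) (auto intro: inj_on_subset)
    ultimately have "point m \<in> forbidden point m"
      unfolding forbidden_def affine_hits_def using \<open>(\<gamma>, m) \<in> r\<close> assms(2) m(1) by blast
    then show False using point_not_forbidden by blast
  qed
  then show ?thesis using m(2) trans by (metis transD)
qed simp

lemma span_inter_G:
  "rat_span (range point) \<inter> G \<gamma> \<subseteq> rat_span (point ` {b. (b, \<gamma>) \<in> r \<or> b = \<gamma>})"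
proof
  fix y assume y: "y \<in> rat_span (range point) \<inter> G \<gamma>"
  then obtain A c where A: "finite A" "inj_on point A" "\<forall>a\<in>A. c a \<noteq> 0"
    and y_eq: "y = (\<Sum>a\<in>A. of_rat (c a) * point a)"
    using rat_span_image_repr[of y point UNIV] by blast
  have "A \<subseteq> {b. (b, \<gamma>) \<in> r \<or> b = \<gamma>}"
    using combination_in_G_bounded[OF A(1,3)] y y_eq by blast
  with A(1,2) show "y \<in> rat_span (point ` {b. (b, \<gamma>) \<in> r \<or> b = \<gamma>})"
    unfolding y_eq by (intro rat_span_image_sum)
qed

theorem span_luzin:
  "ideal_Luzin \<I> (range point) \<and> ideal_Luzin \<I> (rat_span (range point))"
proof -
  have countable_inter: "countable (rat_span (range point) \<inter> I)" if I: "I \<in> \<I>" for I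
  proof -
    obtain \<gamma> where "I \<subseteq> G \<gamma>" using G_cofinal[OF I] by blast
    then have "rat_span (range point) \<inter> I \<subseteq> rat_span (point ` {b. (b, \<gamma>) \<in> r \<or> b = \<gamma>})"
      using span_inter_G[of \<gamma>] by blast
    moreover have "countable {b. (b, \<gamma>) \<in> r \<or> b = \<gamma>}"
      using countable_segment[of \<gamma>] by (simp add: Collect_disj_eq)
    then have "countable (rat_span (point ` {b. (b, \<gamma>) \<in> r \<or> b = \<gamma>}))"
      by (intro rat_span_countable countable_image)
    ultimately show ?thesis by (rule countable_subset)
  qed
  have sub: "range point \<subseteq> rat_span (range point)" using rat_span_mem by blast
  have range_eqpoll: "range point \<approx> (UNIV :: real set)"
    using inj_point by (rule inj_on_image_eqpoll_self)
  have "(UNIV :: real set) \<lesssim> rat_span (range point)"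
    using eqpoll_sym[OF range_eqpoll] subset_imp_lepoll[OF sub] by (rule lepoll_trans1)
  then have span_eqpoll: "rat_span (range point) \<approx> (UNIV :: real set)"
    by (intro lepoll_antisym) (simp_all add: subset_imp_lepoll)
  have "countable (range point \<inter> I)" if "I \<in> \<I>" for I
    using sub by (intro countable_subset[OF _ countable_inter[OF that]]) blast
  with range_eqpoll span_eqpoll countable_inter show ?thesis
    unfolding ideal_Luzin_def by blast
qed

end

theorem mainTheorem16:
  assumes "CH"
    and "standing_ideal \<I>"
  shows "\<exists>L :: real set. ideal_Luzin \<I> L \<and> ideal_Luzin \<I> (rat_span L)"
proof -
  obtain r :: "real rel" where r: "wf r" "trans r" "total_on UNIV r"
    "\<And>y. countable {x. (x, y) \<in> r}"
    using CH_countable_initial_segments[OF assms(1)] by blast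
  obtain G :: "real \<Rightarrow> real set" where G: "\<And>\<gamma>. G \<gamma> \<in> \<I>" "\<And>I. I \<in> \<I> \<Longrightarrow> \<exists>\<gamma>. I \<subseteq> G \<gamma>"
    using standing_ideal_cofinal_family[OF assms(2)] by metis
  interpret span_luzin_construction \<I> r G
    by unfold_locales (fact standing_ideal_sigma[OF assms(2)] standing_ideal_UNIV[OF assms(2)]
        standing_ideal_countable[OF assms(2)] standing_ideal_affine[OF assms(2)] G r)+
  show ?thesis using span_luzin by (rule exI)
qed

end
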